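(* Let $C\ge 4$. There is a constant $K\ge1$ depending only on $C$ such that for every integer $N\ge 3$ and every $C$-uniformly convex sequence $\{a_n\}_{n=1}^N$, there exists a $C^2$ function $f$ on $[\frac1N,1]$ with $f(\frac nN)=a_n$ for $1\le n\le N$ and $K^{-1}\le f'(x)\le K$, $K^{-1}\le f''(x)\le K$ for all $x$ in its domain.
   Context: A real sequence $\{a_n\}_{n=1}^N$ is called $C$-uniformly convex if for all admissible $n$: $a_{n+1}-a_n\in[\frac{1}{CN},\frac{C}{N}]$ and $(a_{n+2}-a_{n+1})-(a_{n+1}-a_n)\in[\frac{1}{CN^2},\frac{C}{N^2}]$ (for $C=4$ this is the paper's notion of a uniformly convex sequence with parameter $N$). *)

theory Defs
  imports "HOL-Analysis.Analysis"
begin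

definition unif_convex :: "real \<Rightarrow> nat \<Rightarrow> (nat \<Rightarrow> real) \<Rightarrow> bool" where
  "unif_convex C N a \<longleftrightarrow>
     (\<forall>n. 1 \<le> n \<and> n + 1 \<le> N \<longrightarrow>
        1 / (C * real N) \<le> a (n+1) - a n \<and> a (n+1) - a n \<le> C / real N) \<and>
     (\<forall>n. 1 \<le> n \<and> n + 2 \<le> N \<longrightarrow>
        1 / (C * (real N)^2) \<le> (a (n+2) - a (n+1)) - (a (n+1) - a n) \<and>
        (a (n+2) - a (n+1)) - (a (n+1) - a n) \<le> C / (real N)^2)"

end

theory Submission
  imports Defs
begin

(* On the cell [n/N, (n+1)/N], with local coordinate t = N x - n, the interpolant is the chord
   through (n/N, a n) and ((n+1)/N, a (n+1)) plus Q(t)/N^2, where Q(0) = Q(1) = 0 and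
   Q'' = P = tau + p t (1-t)^j + r t^j (1-t) with tau = 1/(2C).  As P = tau at both ends of every
   cell, f'' is continuous at the nodes.  Prescribing Q'(0) = -A/2 and Q'(1) = B/2, where A and B
   are N^2 times the second differences at the two nodes of the cell, makes f' continuous, since
   the chord slope jumps by exactly N times the second difference at an interior node.  These two
   linear conditions determine p and r, which are nonnegative once j >= 4 C^2, because the bumps
   then put their mass close to the intended endpoint.  Hence tau <= f'' <= tau + p + r, and f' is
   increasing on each cell, so it is bounded below by its value at the left node, the mean of two
   neighbouring chord slopes. *)

section \<open>A polynomial profile on the unit interval\<close>

definition bump :: "nat \<Rightarrow> real \<Rightarrow> real" where
  "bump j t = t^j - t^(j+1)"

definition bump_int :: "nat \<Rightarrow> real \<Rightarrow> real" where
  "bump_int j t = t^(j+1) / (real j + 1) - t^(j+2) / (real j + 2)"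

definition bump_int2 :: "nat \<Rightarrow> real \<Rightarrow> real" where
  "bump_int2 j t = t^(j+2) / ((real j + 1) * (real j + 2)) - t^(j+3) / ((real j + 2) * (real j + 3))"

lemma has_real_derivative_bump_int [derivative_intros]:
  assumes "(f has_real_derivative f') (at x within S)"
  shows "((\<lambda>x. bump_int j (f x)) has_real_derivative bump j (f x) * f') (at x within S)"
proof (rule DERIV_chain2[OF _ assms])
  show "(bump_int j has_real_derivative bump j (f x)) (at (f x))"
    unfolding bump_int_def[abs_def]
    by (rule DERIV_cong[OF DERIV_diff[OF DERIV_cdivide[OF DERIV_pow] DERIV_cdivide[OF DERIV_pow]]])
      (simp add: bump_def add.commute)
qed

lemma has_real_derivative_bump_int2 [derivative_intros]:
  assumes "(f has_real_derivative f') (at x within S)"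
  shows "((\<lambda>x. bump_int2 j (f x)) has_real_derivative bump_int j (f x) * f') (at x within S)"
proof (rule DERIV_chain2[OF _ assms])
  show "(bump_int2 j has_real_derivative bump_int j (f x)) (at (f x))"
    unfolding bump_int2_def[abs_def]
    by (rule DERIV_cong[OF DERIV_diff[OF DERIV_cdivide[OF DERIV_pow] DERIV_cdivide[OF DERIV_pow]]])
      (simp add: bump_int_def add.commute)
qed

lemma bump_bounds:
  assumes "0 \<le> t" "t \<le> 1"
  shows "0 \<le> bump j t" "bump j t \<le> 1"
proof -
  have "bump j t = t^j * (1 - t)"
    by (simp add: bump_def algebra_simps)
  moreover have "0 \<le> t^j" "t^j \<le> 1"
    using assms by (auto intro: power_le_one)
  ultimately show "0 \<le> bump j t" "bump j t \<le> 1"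
    using assms by (auto intro: mult_le_one)
qed

lemma bump_at_endpoints: "0 < j \<Longrightarrow> bump j 0 = 0" "bump j 1 = 0"
  by (simp_all add: bump_def)

lemma bump_int_at_endpoints: "bump_int j 0 = 0" "bump_int j 1 = 1 / ((real j + 1) * (real j + 2))"
  by (simp_all add: bump_int_def divide_simps)

lemma bump_int2_at_endpoints:
  "bump_int2 j 0 = 0" "bump_int2 j 1 = 2 / ((real j + 1) * (real j + 2) * (real j + 3))"
  by (simp_all add: bump_int2_def divide_simps)

text \<open>The weights are the solution of the linear system \<open>cell_G j \<tau> A B 1 = B / 2\<close>,
  \<open>cell_Q j \<tau> A B 1 = 0\<close>.\<close>

definition bump_weight :: "nat \<Rightarrow> real \<Rightarrow> real \<Rightarrow> real \<Rightarrow> real" where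
  "bump_weight j \<tau> A B =
     (real j + 1) * (real j + 2) * ((real j + 1) * (A - \<tau>) - 2 * (B - \<tau>)) / (2 * (real j - 1))"

definition cell_P :: "nat \<Rightarrow> real \<Rightarrow> real \<Rightarrow> real \<Rightarrow> real \<Rightarrow> real" where
  "cell_P j \<tau> A B t = \<tau> + bump_weight j \<tau> A B * bump j (1 - t) + bump_weight j \<tau> B A * bump j t"

definition cell_G :: "nat \<Rightarrow> real \<Rightarrow> real \<Rightarrow> real \<Rightarrow> real \<Rightarrow> real" where
  "cell_G j \<tau> A B t = - A / 2 + \<tau> * t
     + bump_weight j \<tau> A B * (bump_int j 1 - bump_int j (1 - t)) + bump_weight j \<tau> B A * bump_int j t"

definition cell_Q :: "nat \<Rightarrow> real \<Rightarrow> real \<Rightarrow> real \<Rightarrow> real \<Rightarrow> real" where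
  "cell_Q j \<tau> A B t = - A / 2 * t + \<tau> * t^2 / 2
     + bump_weight j \<tau> A B * (bump_int j 1 * t - bump_int2 j 1 + bump_int2 j (1 - t))
     + bump_weight j \<tau> B A * bump_int2 j t"

lemma has_real_derivative_cell_Q: "(cell_Q j \<tau> A B has_real_derivative cell_G j \<tau> A B t) (at t)"
  unfolding cell_Q_def[abs_def] cell_G_def
  by (auto intro!: derivative_eq_intros simp: algebra_simps)

lemma has_real_derivative_cell_G: "(cell_G j \<tau> A B has_real_derivative cell_P j \<tau> A B t) (at t)"
  unfolding cell_G_def[abs_def] cell_P_def
  by (auto intro!: derivative_eq_intros simp: algebra_simps)

lemma bump_weight_sum:
  assumes "2 \<le> j"
  shows "bump_weight j \<tau> A B + bump_weight j \<tau> B A = (real j + 1) * (real j + 2) * (A + B - 2 * \<tau>) / 2"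
  using assms by (simp add: bump_weight_def divide_simps) (simp add: algebra_simps)

lemma bump_weight_nonneg:
  assumes "2 \<le> j" "2 * \<tau> \<le> A" "2 * B \<le> (real j + 3) * \<tau>"
  shows "0 \<le> bump_weight j \<tau> A B"
proof -
  have "(real j + 1) * \<tau> \<le> (real j + 1) * (A - \<tau>)"
    using assms(2) by (intro mult_left_mono) auto
  then have "0 \<le> (real j + 1) * (A - \<tau>) - 2 * (B - \<tau>)"
    using assms(3) by (simp add: algebra_simps)
  then show ?thesis
    unfolding bump_weight_def using assms(1) by simp
qed

lemma cell_profile_at_endpoints:
  assumes "2 \<le> j"
  shows "cell_Q j \<tau> A B 0 = 0" "cell_Q j \<tau> A B 1 = 0"
    and "cell_G j \<tau> A B 0 = - A / 2" "cell_G j \<tau> A B 1 = B / 2"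
    and "cell_P j \<tau> A B 0 = \<tau>" "cell_P j \<tau> A B 1 = \<tau>"
proof -
  have "real j - 1 \<noteq> 0"
    using assms by simp
  then show "cell_Q j \<tau> A B 1 = 0"
    by (simp add: cell_Q_def bump_weight_def bump_int_at_endpoints bump_int2_at_endpoints divide_simps)
      (simp add: algebra_simps)
  have "cell_G j \<tau> A B 1
      = - A / 2 + \<tau> + (bump_weight j \<tau> A B + bump_weight j \<tau> B A) / ((real j + 1) * (real j + 2))"
    by (simp add: cell_G_def bump_int_at_endpoints add_divide_distrib)
  then show "cell_G j \<tau> A B 1 = B / 2"
    using assms by (simp add: bump_weight_sum divide_simps)
  show "cell_Q j \<tau> A B 0 = 0" "cell_G j \<tau> A B 0 = - A / 2"
    by (simp_all add: cell_Q_def cell_G_def bump_int_at_endpoints bump_int2_at_endpoints)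
  show "cell_P j \<tau> A B 0 = \<tau>" "cell_P j \<tau> A B 1 = \<tau>"
    using assms by (simp_all add: cell_P_def bump_at_endpoints)
qed

lemma cell_P_bounds:
  assumes "2 \<le> j" "0 \<le> \<tau>"
    and "2 * \<tau> \<le> A" "2 * A \<le> (real j + 3) * \<tau>"
    and "2 * \<tau> \<le> B" "2 * B \<le> (real j + 3) * \<tau>"
    and t: "0 \<le> t" "t \<le> 1"
  shows "\<tau> \<le> cell_P j \<tau> A B t"
    and "cell_P j \<tau> A B t \<le> \<tau> + (real j + 1) * (real j + 2) * (A + B) / 2"
proof -
  define p where "p = bump_weight j \<tau> A B"
  define r where "r = bump_weight j \<tau> B A"
  have "0 \<le> p" "0 \<le> r"
    unfolding p_def r_def using assms by (auto intro: bump_weight_nonneg)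
  moreover have "0 \<le> bump j (1 - t)" "bump j (1 - t) \<le> 1" "0 \<le> bump j t" "bump j t \<le> 1"
    using t by (auto intro: bump_bounds)
  ultimately have "0 \<le> p * bump j (1 - t)" "p * bump j (1 - t) \<le> p"
    and "0 \<le> r * bump j t" "r * bump j t \<le> r"
    by (auto intro: mult_left_le)
  moreover have "p + r \<le> (real j + 1) * (real j + 2) * (A + B) / 2"
    unfolding p_def r_def bump_weight_sum[OF assms(1)] using assms(2) by (simp add: divide_right_mono)
  ultimately show "\<tau> \<le> cell_P j \<tau> A B t"
    and "cell_P j \<tau> A B t \<le> \<tau> + (real j + 1) * (real j + 2) * (A + B) / 2"
    unfolding cell_P_def p_def[symmetric] r_def[symmetric] by linarith+
qed

lemma cell_G_bounds:
  assumes "2 \<le> j" "0 \<le> \<tau>"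
    and "2 * \<tau> \<le> A" "2 * A \<le> (real j + 3) * \<tau>"
    and "2 * \<tau> \<le> B" "2 * B \<le> (real j + 3) * \<tau>"
    and t: "0 \<le> t" "t \<le> 1"
  shows "- A / 2 \<le> cell_G j \<tau> A B t" "cell_G j \<tau> A B t \<le> B / 2"
proof -
  have G_mono: "cell_G j \<tau> A B s \<le> cell_G j \<tau> A B s'" if "0 \<le> s" "s \<le> s'" "s' \<le> 1" for s s'
  proof (rule deriv_nonneg_imp_mono[OF has_real_derivative_cell_G])
    fix x assume "x \<in> {s..s'}"
    then have "\<tau> \<le> cell_P j \<tau> A B x"
      using that assms by (intro cell_P_bounds(1)) auto
    then show "0 \<le> cell_P j \<tau> A B x"
      using assms(2) by linarith
  qed (use that in auto)
  show "- A / 2 \<le> cell_G j \<tau> A B t" "cell_G j \<tau> A B t \<le> B / 2"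
    using G_mono[of 0 t] G_mono[of t 1] t cell_profile_at_endpoints[OF assms(1)] by auto
qed

lemma has_field_derivative_within_closed_Union:
  fixes f :: "'a::real_normed_field \<Rightarrow> 'a"
  assumes "finite I" "\<And>i. i \<in> I \<Longrightarrow> closed (U i)"
    and "\<And>i. i \<in> I \<Longrightarrow> x \<in> U i \<Longrightarrow> (f has_field_derivative D) (at x within U i)"
  shows "(f has_field_derivative D) (at x within (\<Union>i\<in>I. U i))"
  using assms
proof (induction I rule: finite_induct)
  case empty
  then show ?case
    by (simp add: has_field_derivative_iff)
next
  case (insert i I)
  have "(f has_field_derivative D) (at x within U i)"
  proof (cases "x \<in> U i")
    case False
    then have "trivial_limit (at x within U i)"
      using insert.prems(1) by (intro not_in_closure_trivial_limitI) simp
    then show ?thesis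
      by (simp add: has_field_derivative_iff)
  qed (use insert.prems in auto)
  then show ?case
    using insert by (simp add: has_field_derivative_iff Lim_within_Un)
qed

section \<open>The piecewise interpolant\<close>

definition bump_degree :: "real \<Rightarrow> nat" where
  "bump_degree C = nat \<lceil>4 * C^2\<rceil>"

definition interp_bound :: "real \<Rightarrow> real" where
  "interp_bound C = C * (real (bump_degree C) + 1) * (real (bump_degree C) + 2) + 1"

lemma interp_bound_ge:
  assumes "0 \<le> C"
  shows "2 * C \<le> interp_bound C" "1 \<le> interp_bound C"
proof -
  have "C * 2 \<le> C * ((real (bump_degree C) + 1) * (real (bump_degree C) + 2))"
    using assms by (intro mult_left_mono) (auto simp: algebra_simps)
  then show "2 * C \<le> interp_bound C" "1 \<le> interp_bound C"
    using assms unfolding interp_bound_def by (simp_all add: mult.assoc)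
qed

context
  fixes C :: real and N :: nat and a :: "nat \<Rightarrow> real"
  assumes C: "1 \<le> C" and N: "2 \<le> N" and conv: "unif_convex C N a"
begin

definition slope :: "nat \<Rightarrow> real" where
  "slope n = real N * (a (n+1) - a n)"

text \<open>At the two boundary nodes any value in \<open>[1/C, C]\<close> would serve.\<close>

definition node_curv :: "nat \<Rightarrow> real" where
  "node_curv k = (if 2 \<le> k \<and> k + 1 \<le> N then real N * (slope k - slope (k - 1)) else 1 / C)"

abbreviation local_coord :: "nat \<Rightarrow> real \<Rightarrow> real" where
  "local_coord n x \<equiv> real N * x - real n"

abbreviation grid_cell :: "nat \<Rightarrow> real set" where
  "grid_cell n \<equiv> {real n / real N..real (n+1) / real N}"

abbreviation profile_Q :: "nat \<Rightarrow> real \<Rightarrow> real" where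
  "profile_Q n \<equiv> cell_Q (bump_degree C) (1 / (2 * C)) (node_curv n) (node_curv (n+1))"

abbreviation profile_G :: "nat \<Rightarrow> real \<Rightarrow> real" where
  "profile_G n \<equiv> cell_G (bump_degree C) (1 / (2 * C)) (node_curv n) (node_curv (n+1))"

abbreviation profile_P :: "nat \<Rightarrow> real \<Rightarrow> real" where
  "profile_P n \<equiv> cell_P (bump_degree C) (1 / (2 * C)) (node_curv n) (node_curv (n+1))"

lemma slope_bounds:
  assumes "1 \<le> n" "n + 1 \<le> N"
  shows "1 / C \<le> slope n" "slope n \<le> C"
proof -
  have "1 / (C * real N) \<le> a (n+1) - a n" "a (n+1) - a n \<le> C / real N"
    using conv assms unfolding unif_convex_def by auto
  then show "1 / C \<le> slope n" "slope n \<le> C"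
    unfolding slope_def using C N by (simp_all add: field_simps)
qed

lemma node_curv_bounds: "1 / C \<le> node_curv k" "node_curv k \<le> C"
proof -
  have "1 / C \<le> 1"
    using C by simp
  then have "1 / C \<le> C"
    using C by linarith
  moreover have "1 / C \<le> node_curv k \<and> node_curv k \<le> C" if k: "2 \<le> k" "k + 1 \<le> N"
  proof -
    define d where "d = (a (k+1) - a k) - (a k - a (k-1))"
    have idx: "k - 1 + 1 = k" "k - 1 + 2 = k + 1" "1 \<le> k - 1"
      using k by auto
    have "1 / (C * (real N)^2) \<le> d" "d \<le> C / (real N)^2"
      using conv k unfolding unif_convex_def d_def by (metis idx)+
    then have "(real N)^2 * (1 / (C * (real N)^2)) \<le> (real N)^2 * d"
      "(real N)^2 * d \<le> (real N)^2 * (C / (real N)^2)"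
      by (meson mult_left_mono zero_le_power2)+
    moreover have "node_curv k = (real N)^2 * d"
      using k idx(1) by (simp add: node_curv_def slope_def d_def power2_eq_square algebra_simps)
    moreover have "(real N)^2 * (1 / (C * (real N)^2)) = 1 / C" "(real N)^2 * (C / (real N)^2) = C"
      using N by simp_all
    ultimately show ?thesis
      by linarith
  qed
  ultimately show "1 / C \<le> node_curv k" "node_curv k \<le> C"
    by (auto simp: node_curv_def)
qed

lemma profile_admissible:
  "2 \<le> bump_degree C" "2 * (1 / (2 * C)) \<le> node_curv k"
  "2 * node_curv k \<le> (real (bump_degree C) + 3) * (1 / (2 * C))"
proof -
  have deg: "4 * C^2 \<le> real (bump_degree C)"
    unfolding bump_degree_def by linarith
  moreover have "1 \<le> C^2"
    using C by simp
  ultimately show "2 \<le> bump_degree C"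
    by linarith
  show "2 * (1 / (2 * C)) \<le> node_curv k"
    using node_curv_bounds(1) by simp
  have "2 * C = 4 * C^2 / (2 * C)"
    using C by (simp add: power2_eq_square)
  also have "\<dots> \<le> (real (bump_degree C) + 3) / (2 * C)"
    using deg C by (intro divide_right_mono) auto
  finally show "2 * node_curv k \<le> (real (bump_degree C) + 3) * (1 / (2 * C))"
    using node_curv_bounds(2)[of k] by simp
qed

lemma profile_bounds:
  assumes "0 \<le> t" "t \<le> 1"
  shows "1 / (2 * C) \<le> profile_P n t" "profile_P n t \<le> interp_bound C"
    and "- node_curv n / 2 \<le> profile_G n t" "profile_G n t \<le> node_curv (n+1) / 2"
proof -
  let ?j = "real (bump_degree C)"
  have tau: "0 \<le> 1 / (2 * C)"
    using C by simp
  note hyps = profile_admissible(1) tau profile_admissible(2,3) profile_admissible(2,3) assms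
  show "1 / (2 * C) \<le> profile_P n t"
    using cell_P_bounds(1)[OF hyps] .
  show "- node_curv n / 2 \<le> profile_G n t" "profile_G n t \<le> node_curv (n+1) / 2"
    using cell_G_bounds[OF hyps] by auto
  have "profile_P n t \<le> 1 / (2 * C) + (?j + 1) * (?j + 2) * (node_curv n + node_curv (n+1)) / 2"
    by (rule cell_P_bounds(2)[OF hyps])
  also have "\<dots> \<le> 1 + (?j + 1) * (?j + 2) * (2 * C) / 2"
    using C node_curv_bounds(2)[of n] node_curv_bounds(2)[of "n+1"]
    by (intro add_mono divide_right_mono mult_left_mono) auto
  also have "\<dots> = interp_bound C"
    unfolding interp_bound_def by simp
  finally show "profile_P n t \<le> interp_bound C" .
qed

definition piece :: "nat \<Rightarrow> real \<Rightarrow> real" where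
  "piece n x = a n + (a (n+1) - a n) * local_coord n x + profile_Q n (local_coord n x) / (real N)^2"

definition piece' :: "nat \<Rightarrow> real \<Rightarrow> real" where
  "piece' n x = slope n + profile_G n (local_coord n x) / real N"

definition piece'' :: "nat \<Rightarrow> real \<Rightarrow> real" where
  "piece'' n x = profile_P n (local_coord n x)"

lemma has_real_derivative_piece:
  "(piece n has_real_derivative piece' n x) (at x)"
  "(piece' n has_real_derivative piece'' n x) (at x)"
proof -
  have coord: "(local_coord n has_real_derivative real N) (at x)"
    by (auto intro!: derivative_eq_intros)
  have "((\<lambda>x. profile_Q n (local_coord n x)) has_real_derivative profile_G n (local_coord n x) * real N) (at x)"
    by (rule DERIV_chain2[OF has_real_derivative_cell_Q coord])
  then show "(piece n has_real_derivative piece' n x) (at x)"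
    unfolding piece_def[abs_def] piece'_def slope_def
    using N by (auto intro!: derivative_eq_intros simp: power2_eq_square)
  have "((\<lambda>x. profile_G n (local_coord n x)) has_real_derivative profile_P n (local_coord n x) * real N) (at x)"
    by (rule DERIV_chain2[OF has_real_derivative_cell_G coord])
  then show "(piece' n has_real_derivative piece'' n x) (at x)"
    unfolding piece'_def[abs_def] piece''_def
    using N by (auto intro!: derivative_eq_intros)
qed

lemma piece_at_nodes:
  "piece n (real n / real N) = a n" "piece n (real (n+1) / real N) = a (n+1)"
  "piece' n (real n / real N) = slope n - node_curv n / (2 * real N)"
  "piece' n (real (n+1) / real N) = slope n + node_curv (n+1) / (2 * real N)"
  "piece'' n (real n / real N) = 1 / (2 * C)" "piece'' n (real (n+1) / real N) = 1 / (2 * C)"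
proof -
  have coords: "local_coord n (real n / real N) = 0" "local_coord n (real (n+1) / real N) = 1"
    using N by simp_all
  note ends = cell_profile_at_endpoints[OF profile_admissible(1)]
  show "piece n (real n / real N) = a n" "piece n (real (n+1) / real N) = a (n+1)"
    "piece' n (real n / real N) = slope n - node_curv n / (2 * real N)"
    "piece' n (real (n+1) / real N) = slope n + node_curv (n+1) / (2 * real N)"
    "piece'' n (real n / real N) = 1 / (2 * C)" "piece'' n (real (n+1) / real N) = 1 / (2 * C)"
    unfolding piece_def piece'_def piece''_def coords ends by simp_all
qed

lemma pieces_agree_at_node:
  assumes "1 \<le> n" "n + 2 \<le> N"
  defines "x \<equiv> real (n+1) / real N"
  shows "piece (n+1) x = piece n x" "piece' (n+1) x = piece' n x" "piece'' (n+1) x = piece'' n x"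
proof -
  have "node_curv (n+1) / (2 * real N) = (slope (n+1) - slope n) / 2"
    using assms N by (simp add: node_curv_def)
  then show "piece' (n+1) x = piece' n x"
    unfolding x_def using piece_at_nodes(3)[of "n+1"] piece_at_nodes(4)[of n] by simp
  show "piece (n+1) x = piece n x" "piece'' (n+1) x = piece'' n x"
    unfolding x_def using piece_at_nodes[of n] piece_at_nodes[of "n+1"] by simp_all
qed

definition cell_index :: "real \<Rightarrow> nat" where
  "cell_index x = min (N - 1) (nat \<lfloor>real N * x\<rfloor>)"

definition interp :: "real \<Rightarrow> real" where
  "interp x = piece (cell_index x) x"

definition interp' :: "real \<Rightarrow> real" where
  "interp' x = piece' (cell_index x) x"

definition interp'' :: "real \<Rightarrow> real" where
  "interp'' x = piece'' (cell_index x) x"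

lemma cell_index_bounds:
  assumes "x \<in> {1 / real N..1}"
  shows "1 \<le> cell_index x" "cell_index x + 1 \<le> N" "x \<in> grid_cell (cell_index x)"
proof -
  define k where "k = nat \<lfloor>real N * x\<rfloor>"
  have Nx: "1 \<le> real N * x" "real N * x \<le> real N"
    using assms N by (auto simp: field_simps)
  then have k: "real k \<le> real N * x" "real N * x < real k + 1" "1 \<le> k"
    unfolding k_def by linarith+
  show "1 \<le> cell_index x" "cell_index x + 1 \<le> N"
    using k N unfolding cell_index_def k_def[symmetric] by auto
  have "real (cell_index x) \<le> real N * x" "real N * x \<le> real (cell_index x) + 1"
    using k Nx N unfolding cell_index_def k_def[symmetric] by (auto simp: min_def)
  then show "x \<in> grid_cell (cell_index x)"
    using N by (simp add: field_simps)
qed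

lemma interp_eq_piece:
  assumes n: "1 \<le> n" "n + 1 \<le> N" and x: "x \<in> grid_cell n"
  shows "interp x = piece n x" "interp' x = piece' n x" "interp'' x = piece'' n x"
proof -
  have Nx: "real n \<le> real N * x" "real N * x \<le> real n + 1"
    using x N by (auto simp: field_simps)
  have "cell_index x = n \<or> cell_index x = n + 1 \<and> x = real (n+1) / real N \<and> n + 2 \<le> N"
  proof (cases "real N * x < real n + 1")
    case True
    then have "\<lfloor>real N * x\<rfloor> = int n"
      using Nx by (simp add: floor_eq_iff)
    then show ?thesis
      using n by (simp add: cell_index_def)
  next
    case False
    then have "real N * x = real (n+1)"
      using Nx by simp
    moreover from this have "x = real (n+1) / real N"
      using N by (simp add: field_simps)
    ultimately show ?thesis
      using n by (auto simp: cell_index_def)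
  qed
  then show "interp x = piece n x" "interp' x = piece' n x" "interp'' x = piece'' n x"
    unfolding interp_def interp'_def interp''_def using n pieces_agree_at_node by auto
qed

lemma grid_cells_cover: "{1 / real N..1} = (\<Union>n\<in>{1..<N}. grid_cell n)"
proof
  show "{1 / real N..1} \<subseteq> (\<Union>n\<in>{1..<N}. grid_cell n)"
    using cell_index_bounds by fastforce
  show "(\<Union>n\<in>{1..<N}. grid_cell n) \<subseteq> {1 / real N..1}"
  proof
    fix x assume "x \<in> (\<Union>n\<in>{1..<N}. grid_cell n)"
    then obtain n where "1 \<le> n" "n + 1 \<le> N" "real n / real N \<le> x" "x \<le> real (n+1) / real N"
      by auto
    moreover have "1 / real N \<le> real n / real N" "real (n+1) / real N \<le> 1"
      using calculation(1,2) N by (auto simp: field_simps)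
    ultimately show "x \<in> {1 / real N..1}"
      by (meson atLeastAtMost_iff order_trans)
  qed
qed

lemma has_real_derivative_interp:
  assumes "x \<in> {1 / real N..1}"
  shows "(interp has_real_derivative interp' x) (at x within {1 / real N..1})"
    and "(interp' has_real_derivative interp'' x) (at x within {1 / real N..1})"
proof -
  have "(interp has_real_derivative interp' x) (at x within grid_cell n)"
    and "(interp' has_real_derivative interp'' x) (at x within grid_cell n)"
    if "n \<in> {1..<N}" "x \<in> grid_cell n" for n
  proof -
    have agree: "interp y = piece n y" "interp' y = piece' n y" "interp'' y = piece'' n y"
      if "y \<in> grid_cell n" for y
      using interp_eq_piece \<open>n \<in> {1..<N}\<close> that by auto
    have "(interp has_real_derivative piece' n x) (at x within grid_cell n)"
      using has_field_derivative_at_within[OF has_real_derivative_piece(1)]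
      by (rule has_field_derivative_transform_within[where d = 1]) (use agree that in auto)
    moreover have "(interp' has_real_derivative piece'' n x) (at x within grid_cell n)"
      using has_field_derivative_at_within[OF has_real_derivative_piece(2)]
      by (rule has_field_derivative_transform_within[where d = 1]) (use agree that in auto)
    ultimately show "(interp has_real_derivative interp' x) (at x within grid_cell n)"
      and "(interp' has_real_derivative interp'' x) (at x within grid_cell n)"
      using agree that(2) by simp_all
  qed
  then show "(interp has_real_derivative interp' x) (at x within {1 / real N..1})"
    and "(interp' has_real_derivative interp'' x) (at x within {1 / real N..1})"
    unfolding grid_cells_cover by (auto intro: has_field_derivative_within_closed_Union)
qed

lemma continuous_on_interp'': "continuous_on {1 / real N..1} interp''"
  unfolding grid_cells_cover
proof (intro continuous_on_closed_Union ballI)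
  fix n assume n: "n \<in> {1..<N}"
  have "continuous_on (grid_cell n) (piece'' n)"
    unfolding piece''_def cell_P_def bump_def by (intro continuous_intros)
  then show "continuous_on (grid_cell n) interp''"
    by (rule continuous_on_eq) (use interp_eq_piece n in auto)
qed auto

lemma interp_at_nodes:
  assumes "1 \<le> k" "k \<le> N"
  shows "interp (real k / real N) = a k"
proof (cases "k = N")
  case True
  have "real k / real N \<in> grid_cell (N - 1)"
    using N True by (simp add: field_simps)
  then show ?thesis
    using interp_eq_piece(1)[of "N - 1"] piece_at_nodes(2)[of "N - 1"] True N by simp
next
  case False
  then show ?thesis
    using assms interp_eq_piece(1)[of k] piece_at_nodes(1)[of k] N by (simp add: field_simps)
qed

lemma slope_at_left_node_ge:
  assumes "1 \<le> n" "n + 1 \<le> N"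
  shows "1 / (2 * C) \<le> slope n - node_curv n / (2 * real N)"
proof (cases "n = 1")
  case True
  have "1 / C / (2 * real N) \<le> 1 / C / 2"
    using C N by (intro divide_left_mono) auto
  then show ?thesis
    using True slope_bounds[OF assms] by (simp add: node_curv_def)
next
  case False
  then have "slope n - node_curv n / (2 * real N) = (slope n + slope (n - 1)) / 2"
    using assms N by (simp add: node_curv_def field_simps)
  moreover have "1 / C \<le> slope n" "1 / C \<le> slope (n - 1)"
    using assms False slope_bounds[of n] slope_bounds[of "n - 1"] by auto
  moreover have "0 < C"
    using C by simp
  ultimately show ?thesis
    by (simp add: field_simps)
qed

lemma interp_bounds:
  assumes "x \<in> {1 / real N..1}"
  shows "1 / interp_bound C \<le> interp' x" "interp' x \<le> interp_bound C"
    and "1 / interp_bound C \<le> interp'' x" "interp'' x \<le> interp_bound C"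
proof -
  define n where "n = cell_index x"
  have n: "1 \<le> n" "n + 1 \<le> N" and t: "0 \<le> local_coord n x" "local_coord n x \<le> 1"
    using cell_index_bounds[OF assms] N unfolding n_def by (auto simp: field_simps)
  have K: "1 / interp_bound C \<le> 1 / (2 * C)" "2 * C \<le> interp_bound C"
    using C interp_bound_ge[of C] by (auto intro: divide_left_mono)
  note prof = profile_bounds[OF t, of n]
  show "1 / interp_bound C \<le> interp'' x" "interp'' x \<le> interp_bound C"
    using K prof(1,2) unfolding interp''_def piece''_def n_def[symmetric] by auto
  have "- node_curv n / 2 / real N \<le> profile_G n (local_coord n x) / real N"
    using prof(3) N by (intro divide_right_mono) auto
  then have "1 / (2 * C) \<le> interp' x"
    using slope_at_left_node_ge[OF n] unfolding interp'_def piece'_def n_def[symmetric] by simp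
  then show "1 / interp_bound C \<le> interp' x"
    using K(1) by linarith
  have "profile_G n (local_coord n x) / real N \<le> C / 2 / real N"
    using prof(4) node_curv_bounds(2)[of "n+1"] N by (intro divide_right_mono) auto
  also have "\<dots> \<le> C"
    using C N by (simp add: field_simps)
  finally show "interp' x \<le> interp_bound C"
    using slope_bounds(2)[OF n] K(2) unfolding interp'_def piece'_def n_def[symmetric] by linarith
qed

lemma C2_interpolant:
  "\<exists>f f' f'' :: real \<Rightarrow> real.
     (\<forall>x\<in>{1 / real N..1}.
        (f has_real_derivative f' x) (at x within {1 / real N..1}) \<and>
        (f' has_real_derivative f'' x) (at x within {1 / real N..1})) \<and>
     continuous_on {1 / real N..1} f'' \<and>
     (\<forall>n. 1 \<le> n \<and> n \<le> N \<longrightarrow> f (real n / real N) = a n) \<and>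
     (\<forall>x\<in>{1 / real N..1}.
        1 / interp_bound C \<le> f' x \<and> f' x \<le> interp_bound C \<and>
        1 / interp_bound C \<le> f'' x \<and> f'' x \<le> interp_bound C)"
  using has_real_derivative_interp continuous_on_interp'' interp_at_nodes interp_bounds by blast

end

theorem corollary1:
  fixes C :: real
  assumes "C \<ge> 4"
  shows "\<exists>K::real. K \<ge> 1 \<and>
    (\<forall>(N::nat) (a::nat \<Rightarrow> real). N \<ge> 3 \<and> unif_convex C N a \<longrightarrow>
      (\<exists>f f' f'' :: real \<Rightarrow> real.
         (\<forall>x\<in>{1 / real N..1}.
            (f has_real_derivative f' x) (at x within {1 / real N..1}) \<and>
            (f' has_real_derivative f'' x) (at x within {1 / real N..1})) \<and>
         continuous_on {1 / real N..1} f'' \<and>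
         (\<forall>n. 1 \<le> n \<and> n \<le> N \<longrightarrow> f (real n / real N) = a n) \<and>
         (\<forall>x\<in>{1 / real N..1}.
            1 / K \<le> f' x \<and> f' x \<le> K \<and> 1 / K \<le> f'' x \<and> f'' x \<le> K)))"
  using assms
  by (intro exI[of _ "interp_bound C"] conjI allI impI interp_bound_ge(2) C2_interpolant) auto

end
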